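(* Let $e_1,\dots,e_n>0$ with $\sum_ie_i=1$ and fix the reported demands of all agents other than $i$. Let $a_i$ and $a_i'$ be agent $i$'s MMF allocations when she reports $d_i$ and $d_i'$ respectively. If $d_i<d_i'$, then $a_i\le a_i'$, with equality only when agent $i$ is allocated in the saturating step (rather than being allocated her reported demand) under both reports.
   Context: MMF$(e,d)$: set $r=1$, $E=1$, $S=\{1,\dots,n\}$, $a=0$; process agents $j$ in ascending order of $d_j/e_j$; if $d_j<re_j/E$, set $a_j=d_j$ (agent $j$ is "allocated her reported demand"), remove $j$ from $S$, $r\leftarrow r-d_j$, $E\leftarrow E-e_j$ and continue; otherwise (the "saturating step") set $a_k=re_k/E$ for all $k\in S$ and stop; output $a$. *)

theory Defs
  imports Complex_Main
begin

(* Agents are 0..<n; e j = endowment, d j = reported demand.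
   The MMF procedure processes a list of agents in order, with
   remaining resource r and remaining endowment E. *)

fun mmf_aux :: "(nat \<Rightarrow> real) \<Rightarrow> (nat \<Rightarrow> real) \<Rightarrow> nat list \<Rightarrow> real \<Rightarrow> real \<Rightarrow> (nat \<Rightarrow> real)" where
  "mmf_aux e d [] r E = (\<lambda>_. 0)"
| "mmf_aux e d (j # js) r E =
     (if d j < r * e j / E
      then (mmf_aux e d js (r - d j) (E - e j))(j := d j)
      else (\<lambda>k. if k \<in> set (j # js) then r * e k / E else 0))"

fun mmf_sat_aux :: "(nat \<Rightarrow> real) \<Rightarrow> (nat \<Rightarrow> real) \<Rightarrow> nat list \<Rightarrow> real \<Rightarrow> real \<Rightarrow> nat set" where
  "mmf_sat_aux e d [] r E = {}"
| "mmf_sat_aux e d (j # js) r E =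
     (if d j < r * e j / E
      then mmf_sat_aux e d js (r - d j) (E - e j)
      else set (j # js))"

(* processing order: ascending d_j/e_j, ties broken by index (sort_key is stable) *)
definition mmf_order :: "nat \<Rightarrow> (nat \<Rightarrow> real) \<Rightarrow> (nat \<Rightarrow> real) \<Rightarrow> nat list" where
  "mmf_order n e d = sort_key (\<lambda>j. d j / e j) [0..<n]"

definition MMF :: "nat \<Rightarrow> (nat \<Rightarrow> real) \<Rightarrow> (nat \<Rightarrow> real) \<Rightarrow> (nat \<Rightarrow> real)" where
  "MMF n e d = mmf_aux e d (mmf_order n e d) 1 1"

definition MMF_saturated :: "nat \<Rightarrow> (nat \<Rightarrow> real) \<Rightarrow> (nat \<Rightarrow> real) \<Rightarrow> nat set" where
  "MMF_saturated n e d = mmf_sat_aux e d (mmf_order n e d) 1 1"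

end

theory Submission
  imports Defs
begin

(* MMF is water-filling: either every demand is met, or there is a level l such that agent k
   receives min (d k) (l * e k), these amounts exhaust the resource, and the saturated agents
   are those with l * e k <= d k.  The filled volume at level l strictly increases with l
   beyond a saturated agent, so the level is unique.  If all demands are met under the higher
   report di', agent i gets di' > di.  Otherwise let l' be its level.  If di < l' * e i, agent i
   gets more than di under di', and at most di under di.  Otherwise the share of i is capped at
   l' * e i under both reports, so the filled volume at l' is the same for both, and by
   uniqueness both reports have level l' and give i the saturated share l' * e i. *)

definition water_filled :: "(nat \<Rightarrow> real) \<Rightarrow> (nat \<Rightarrow> real) \<Rightarrow> nat set \<Rightarrow> real \<Rightarrow> real" where
  "water_filled e d A l = (\<Sum>k\<in>A. min (d k) (l * e k))"

lemma water_filled_le_sum: "water_filled e d A l \<le> sum d A"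
  unfolding water_filled_def by (rule sum_mono) simp

lemma water_filled_strict_mono:
  assumes "finite A" "\<forall>k\<in>A. 0 < e k" "m < l" "k \<in> A" "l * e k \<le> d k"
  shows "water_filled e d A m < water_filled e d A l"
  unfolding water_filled_def
proof (rule sum_strict_mono_ex1)
  have "m * e j \<le> l * e j" if "j \<in> A" for j
    using assms(2,3) that by (simp add: less_imp_le mult_right_mono)
  then show "\<forall>j\<in>A. min (d j) (m * e j) \<le> min (d j) (l * e j)"
    by (fastforce intro: min.mono)
  have "m * e k < l * e k" using assms(2-4) by simp
  then show "\<exists>j\<in>A. min (d j) (m * e j) < min (d j) (l * e j)"
    using assms(4,5) by (intro bexI[of _ k]) auto
qed (rule assms(1))

lemma water_filled_level_unique:
  assumes "finite A" "\<forall>k\<in>A. 0 < e k"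
    and "water_filled e d A l = water_filled e d A m"
    and "k \<in> A" "l * e k \<le> d k" and "k' \<in> A" "m * e k' \<le> d k'"
  shows "l = m"
  using water_filled_strict_mono[of A e m l k d] water_filled_strict_mono[of A e l m k' d] assms
  by (cases l m rule: linorder_cases) auto

lemma water_filled_fun_upd_capped:
  assumes "l * e i \<le> x" "l * e i \<le> y"
  shows "water_filled e (d(i := x)) A l = water_filled e (d(i := y)) A l"
  unfolding water_filled_def using assms by (intro sum.cong) auto

lemma fair_share_below_sorted_demands:
  fixes d e :: "nat \<Rightarrow> real"
  assumes "sorted (map (\<lambda>k. d k / e k) (j # js))" "\<forall>k\<in>set (j # js). 0 < e k"
    and "c * e j \<le> d j"
  shows "\<forall>k\<in>set (j # js). c * e k \<le> d k"
proof
  fix k assume k: "k \<in> set (j # js)"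
  have "0 < e j" "0 < e k" using assms(2) k by auto
  have "c \<le> d j / e j" using \<open>0 < e j\<close> assms(3) by (simp add: pos_le_divide_eq)
  also have "\<dots> \<le> d k / e k" using assms(1) k by auto
  finally show "c * e k \<le> d k" using \<open>0 < e k\<close> by (simp add: pos_le_divide_eq)
qed

lemma unsaturated_step_level_bounds:
  fixes a b d r l :: real
  assumes "0 < a" "0 < b" "d < r * a / (a + b)" "(r - d) / b \<le> l"
  shows "r / (a + b) < l" and "d < l * a"
proof -
  have "0 < a + b" using assms(1,2) by simp
  then have "r * b < (r - d) * (a + b)" using assms(3) by (simp add: less_divide_eq algebra_simps)
  then have "r / (a + b) < (r - d) / b"
    using \<open>0 < a + b\<close> assms(2) by (simp add: pos_divide_less_eq pos_less_divide_eq)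
  then show l_gt: "r / (a + b) < l" using assms(4) by linarith
  have "d < r / (a + b) * a" using assms(3) by simp
  also have "\<dots> < l * a" using mult_strict_right_mono[OF l_gt assms(1)] .
  finally show "d < l * a" .
qed

definition meets_all_demands :: "(nat \<Rightarrow> real) \<Rightarrow> nat set \<Rightarrow> real \<Rightarrow> (nat \<Rightarrow> real) \<Rightarrow> nat set \<Rightarrow> bool" where
  "meets_all_demands d A r a S \<longleftrightarrow> sum d A < r \<and> (\<forall>k\<in>A. a k = d k) \<and> S = {}"

definition fills_to_level ::
    "(nat \<Rightarrow> real) \<Rightarrow> (nat \<Rightarrow> real) \<Rightarrow> nat set \<Rightarrow> real \<Rightarrow> (nat \<Rightarrow> real) \<Rightarrow> nat set \<Rightarrow> real \<Rightarrow> bool" where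
  "fills_to_level e d A r a S l \<longleftrightarrow> water_filled e d A l = r
     \<and> (\<forall>k\<in>A. a k = min (d k) (l * e k)) \<and> S = {k \<in> A. l * e k \<le> d k} \<and> S \<noteq> {}"

lemma fills_to_level_insert:
  assumes "fills_to_level e d A (r - d j) a S l" "d j < l * e j" "j \<notin> A" "finite A"
  shows "fills_to_level e d (insert j A) r (a(j := d j)) S l"
  using assms unfolding fills_to_level_def water_filled_def by auto

lemma fills_to_level_fair_share:
  fixes d e :: "nat \<Rightarrow> real"
  assumes "sorted (map (\<lambda>k. d k / e k) (j # js))" "\<forall>k\<in>set (j # js). 0 < e k"
    and "E = sum e (set (j # js))" "r / E * e j \<le> d j"
  shows "fills_to_level e d (set (j # js)) r (\<lambda>k. if k \<in> set (j # js) then r * e k / E else 0)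
           (set (j # js)) (r / E)"
proof -
  have "0 < E" using assms(2) unfolding assms(3) by (intro sum_pos) auto
  have sat: "\<forall>k\<in>set (j # js). r / E * e k \<le> d k"
    by (rule fair_share_below_sorted_demands[OF assms(1,2,4)])
  have "water_filled e d (set (j # js)) (r / E) = (\<Sum>k\<in>set (j # js). r / E * e k)"
    unfolding water_filled_def using sat by (intro sum.cong) auto
  also have "\<dots> = r / E * E" by (simp add: assms(3) sum_distrib_left)
  also have "\<dots> = r" using \<open>0 < E\<close> by simp
  finally show ?thesis using sat unfolding fills_to_level_def by auto
qed

lemma mmf_aux_water_filling:
  assumes "sorted (map (\<lambda>k. d k / e k) L)" "distinct L" "\<forall>k\<in>set L. 0 < e k"
    and "E = sum e (set L)" "0 < r"
  shows "meets_all_demands d (set L) r (mmf_aux e d L r E) (mmf_sat_aux e d L r E)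
    \<or> (\<exists>l \<ge> r / E. fills_to_level e d (set L) r (mmf_aux e d L r E) (mmf_sat_aux e d L r E) l)"
  using assms
proof (induction L arbitrary: r E)
  case Nil
  then show ?case by (simp add: meets_all_demands_def)
next
  case (Cons j js)
  have ej: "0 < e j" and j_notin: "j \<notin> set js" using Cons.prems by auto
  have E: "E = e j + sum e (set js)" using Cons.prems(4) j_notin by simp
  have "0 \<le> sum e (set js)" using Cons.prems(3) by (simp add: less_imp_le sum_nonneg)
  then have E_pos: "0 < E" using E ej by linarith
  show ?case
  proof (cases "d j < r * e j / E")
    case False
    then show ?thesis
      using fills_to_level_fair_share[OF Cons.prems(1,3,4)] E_pos by (intro disjI2) auto
  next
    case True
    let ?a = "mmf_aux e d js (r - d j) (E - e j)" and ?S = "mmf_sat_aux e d js (r - d j) (E - e j)"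
    have "r * e j / E \<le> r" using Cons.prems(5) E ej \<open>0 \<le> sum e (set js)\<close>
      by (simp add: divide_le_eq)
    then have "0 < r - d j" using True by linarith
    moreover have "sorted (map (\<lambda>k. d k / e k) js)" "distinct js" "\<forall>k\<in>set js. 0 < e k"
      "E - e j = sum e (set js)" using Cons.prems E by auto
    ultimately have "meets_all_demands d (set js) (r - d j) ?a ?S
        \<or> (\<exists>l \<ge> (r - d j) / (E - e j). fills_to_level e d (set js) (r - d j) ?a ?S l)"
      using Cons.IH by blast
    then show ?thesis
    proof (elim disjE exE conjE)
      assume "meets_all_demands d (set js) (r - d j) ?a ?S"
      then show ?thesis using True j_notin by (auto simp: meets_all_demands_def)
    next
      fix l
      assume l_ge: "(r - d j) / (E - e j) \<le> l" and filled: "fills_to_level e d (set js) (r - d j) ?a ?S l"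
      have "js \<noteq> []" using filled unfolding fills_to_level_def by auto
      then have "0 < sum e (set js)" using Cons.prems(3) by (intro sum_pos) auto
      then have "r / E < l" and "d j < l * e j"
        using unsaturated_step_level_bounds[OF ej, of "sum e (set js)" "d j" r l] True l_ge E by auto
      with filled j_notin have "fills_to_level e d (insert j (set js)) r (?a(j := d j)) ?S l"
        by (intro fills_to_level_insert) auto
      then show ?thesis using True \<open>r / E < l\<close> by (intro disjI2 exI[of _ l]) (simp add: fun_upd_def)
    qed
  qed
qed

lemma MMF_cases:
  fixes e D :: "nat \<Rightarrow> real"
  assumes "\<forall>k<n. 0 < e k" "(\<Sum>k<n. e k) = 1"
  obtains (all_met) "(\<Sum>k<n. D k) < 1" "\<forall>k<n. MMF n e D k = D k" "MMF_saturated n e D = {}"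
  | (level) l where "water_filled e D {..<n} l = 1" "\<forall>k<n. MMF n e D k = min (D k) (l * e k)"
      "MMF_saturated n e D = {k. k < n \<and> l * e k \<le> D k}" "MMF_saturated n e D \<noteq> {}"
proof -
  let ?L = "mmf_order n e D"
  have set_L: "set ?L = {..<n}" and "distinct ?L" and "sorted (map (\<lambda>k. D k / e k) ?L)"
    unfolding mmf_order_def by (auto intro: sorted_sort_key)
  then have "meets_all_demands D {..<n} 1 (MMF n e D) (MMF_saturated n e D)
    \<or> (\<exists>l. fills_to_level e D {..<n} 1 (MMF n e D) (MMF_saturated n e D) l)"
    using mmf_aux_water_filling[of D e ?L 1 1] assms
    unfolding MMF_def MMF_saturated_def set_L by auto
  then show ?thesis
    using that unfolding meets_all_demands_def fills_to_level_def by auto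
qed

lemma MMF_le_demand:
  fixes e D :: "nat \<Rightarrow> real"
  assumes "\<forall>k<n. 0 < e k" "(\<Sum>k<n. e k) = 1" "j < n"
  shows "MMF n e D j \<le> D j"
  using assms(3) by (cases rule: MMF_cases[where D = D, OF assms(1,2)]) auto

theorem mainTheorem16:
  fixes n i :: nat and e d :: "nat \<Rightarrow> real" and di di' :: real
  assumes e_pos: "\<And>j. j < n \<Longrightarrow> e j > 0"
    and e_sum: "(\<Sum>j<n. e j) = 1"
    and d_nonneg: "\<And>j. j < n \<Longrightarrow> j \<noteq> i \<Longrightarrow> d j \<ge> 0"
    and i: "i < n"
    and di_nonneg: "0 \<le> di"
    and lt: "di < di'"
  shows "MMF n e (d(i := di)) i \<le> MMF n e (d(i := di')) i
       \<and> (MMF n e (d(i := di)) i = MMF n e (d(i := di')) i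
            \<longrightarrow> i \<in> MMF_saturated n e (d(i := di)) \<and> i \<in> MMF_saturated n e (d(i := di')))"
proof -
  have e_pos': "\<forall>k<n. 0 < e k" using e_pos by simp
  have a_le: "MMF n e (d(i := di)) i \<le> di"
    using MMF_le_demand[where D = "d(i := di)", OF e_pos' e_sum i] by simp
  show ?thesis
  proof (cases rule: MMF_cases[where D = "d(i := di')", OF e_pos' e_sum,
        case_names all_met' level'])
    case all_met'
    then show ?thesis using a_le i lt by auto
  next
    case (level' l')
    have a'_eq: "MMF n e (d(i := di')) i = min di' (l' * e i)" using level'(2) i by simp
    show ?thesis
    proof (cases "di < l' * e i")
      case True
      then show ?thesis using a_le a'_eq lt by auto
    next
      case False
      then have filled_l': "water_filled e (d(i := di)) {..<n} l' = 1"
        using level'(1) water_filled_fun_upd_capped[of l' e i di di'] lt by simp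
      then show ?thesis
      proof (cases rule: MMF_cases[where D = "d(i := di)", OF e_pos' e_sum,
            case_names all_met level])
        case all_met
        then show ?thesis
          using water_filled_le_sum[of e "d(i := di)" "{..<n}" l'] filled_l' by simp
      next
        case (level l)
        then have "l = l'"
          using water_filled_level_unique[of "{..<n}" e "d(i := di)" l l'] e_pos i False filled_l'
          by fastforce
        then show ?thesis using level(2,3) level'(3) a'_eq False i lt by auto
      qed
    qed
  qed
qed

end
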